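(* For any completely regular frame $L$, the following are equivalent: (1) $L$ is extremally disconnected; (2) $\overline{\mathrm{C}}(L)=\overline{\mathrm{H}}(L)$; (3) $\overline{\mathrm{C}}(L)$ is a complete lattice.
   Context: $\mathbb{Q}$ is the rationals; $a^\ast$ is the pseudocomplement. A frame is extremally disconnected if $a^\ast\vee a^{\ast\ast}=1$ for all $a$. The frame $\mathfrak{L}(\overline{\mathbb{IR}})$ is presented by generators $(r,\textsf{---})$, $(\textsf{---},s)$ ($r,s\in\mathbb{Q}$) subject to (r1) $(r,\textsf{---})\wedge(\textsf{---},s)=0$ whenever $r\ge s$; (r3) $(r,\textsf{---})=\bigvee_{s>r}(s,\textsf{---})$; (r4) $(\textsf{---},s)=\bigvee_{r<s}(\textsf{---},r)$. $\overline{\mathrm{IC}}(L)$ is the set of frame homomorphisms $\mathfrak{L}(\overline{\mathbb{IR}})\to L$ ordered by $f\le g$ iff $f(r,\textsf{---})\le g(r,\textsf{---})$ and $g(\textsf{---},s)\le f(\textsf{---},s)$ for all $r,s$; $\overline{\mathrm{C}}(L)$ is the subposet of those $f$ with $f(r,\textsf{---})\vee f(\textsf{---},s)=1$ whenever $r<s$; $\overline{\mathrm{H}}(L)$ is the subposet of those $f$ with $f(r,\textsf{---})^\ast\le f(\textsf{---},s)$ and $f(\textsf{---},s)^\ast\le f(r,\textsf{---})$ whenever $r<s$. *)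

theory Defs
  imports Main "HOL.Rat"
begin

class frame = complete_lattice +
  assumes inf_Sup_distrib_frame: "inf a (Sup B) = Sup ((\<lambda>b. inf a b) ` B)"

definition pcompl :: "'a::frame \<Rightarrow> 'a" where
  "pcompl a = Sup {b. inf b a = bot}"

definition rather_below :: "'a::frame \<Rightarrow> 'a \<Rightarrow> bool" where
  "rather_below b a \<longleftrightarrow> sup (pcompl b) a = top"

definition completely_below :: "'a::frame \<Rightarrow> 'a \<Rightarrow> bool" where
  "completely_below b a \<longleftrightarrow>
     (\<exists>c :: rat \<Rightarrow> 'a. c 0 = b \<and> c 1 = a \<and>
        (\<forall>p q. 0 \<le> p \<and> p < q \<and> q \<le> 1 \<longrightarrow> rather_below (c p) (c q)))"

definition completely_regular_frame :: "'a::frame itself \<Rightarrow> bool" where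
  "completely_regular_frame (_ :: 'a itself) \<longleftrightarrow>
     (\<forall>a :: 'a. a = Sup {b. completely_below b a})"

definition extremally_disconnected :: "'a::frame itself \<Rightarrow> bool" where
  "extremally_disconnected (_ :: 'a itself) \<longleftrightarrow>
     (\<forall>a :: 'a. sup (pcompl a) (pcompl (pcompl a)) = top)"

text \<open>A frame homomorphism f from the frame L(extended IR) into L is represented by
  its values on the generators: fst f r = f(r,---) and snd f s = f(---,s).
  By the universal property of the presentation, such homomorphisms are exactly the
  pairs of maps satisfying the images of the relations (r1), (r3), (r4) in L.\<close>
type_synonym 'a ext_fn = "(rat \<Rightarrow> 'a) \<times> (rat \<Rightarrow> 'a)"

definition IC_bar :: "'a::frame ext_fn set" where
  "IC_bar = {(u, d).
      (\<forall>r s. r \<ge> s \<longrightarrow> inf (u r) (d s) = bot) \<and>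
      (\<forall>r. u r = Sup {u s | s. s > r}) \<and>
      (\<forall>s. d s = Sup {d r | r. r < s})}"

definition ext_le :: "'a::frame ext_fn \<Rightarrow> 'a ext_fn \<Rightarrow> bool" where
  "ext_le f g \<longleftrightarrow> (\<forall>r. fst f r \<le> fst g r) \<and> (\<forall>s. snd g s \<le> snd f s)"

definition C_bar :: "'a::frame ext_fn set" where
  "C_bar = {f \<in> IC_bar. \<forall>r s. r < s \<longrightarrow> sup (fst f r) (snd f s) = top}"

definition H_bar :: "'a::frame ext_fn set" where
  "H_bar = {f \<in> IC_bar. \<forall>r s. r < s \<longrightarrow>
      pcompl (fst f r) \<le> snd f s \<and> pcompl (snd f s) \<le> fst f r}"

definition complete_subposet :: "'b set \<Rightarrow> ('b \<Rightarrow> 'b \<Rightarrow> bool) \<Rightarrow> bool" where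
  "complete_subposet P le \<longleftrightarrow>
     (\<forall>S \<subseteq> P.
        (\<exists>u \<in> P. (\<forall>f \<in> S. le f u) \<and> (\<forall>v \<in> P. (\<forall>f \<in> S. le f v) \<longrightarrow> le u v)) \<and>
        (\<exists>l \<in> P. (\<forall>f \<in> S. le l f) \<and> (\<forall>v \<in> P. (\<forall>f \<in> S. le v f) \<longrightarrow> le v l)))"

end

theory Submission
  imports Defs
begin

text \<open>
  Always C_bar \<subseteq> H_bar. If L is extremally disconnected, f \<in> H_bar and r < t < s, then
  f(r,---) \<squnion> f(---,s) \<ge> a* \<squnion> a** = 1 for a = f(---,t). Conversely the constant pair
  (a**, a*) always lies in H_bar, and lies in C_bar only if a* \<squnion> a** = 1.

  Every descending scale e (e q rather below e p for p < q) yields the element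
  (r \<mapsto> \<Squnion>{e p | p > r}, s \<mapsto> \<Squnion>{(e q)* | q < s}) of C_bar. In an extremally disconnected
  frame, for S \<subseteq> C_bar the regular elements (\<Squnion>{f(t,---) | f \<in> S})** form such a scale,
  and its function is the supremum of S in C_bar; infima are suprema of lower bounds.

  Conversely, by complete regularity a is the join of all b completely below a, and each
  scale from b to a gives an element of C_bar that is at least b on (-\<infinity>,1) and at most a
  on [0,\<infinity>). Scales below a*, reflected at 1/2, give upper bounds of all of these, so their
  supremum h in C_bar satisfies a \<le> h(r,---) for r < 1 and a* \<le> h(---,s) for s > 0. Hence
  h(1/4,---) \<le> a** and h(---,1/2) \<le> a*, and their join is 1 because h \<in> C_bar.
\<close>

lemma inf_sup_distrib_frame: "inf (a::'a::frame) (sup b c) = sup (inf a b) (inf a c)"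
  using inf_Sup_distrib_frame[of a "{b, c}"] by simp

lemma inf_Sup_eq_bot: "(\<And>b. b \<in> B \<Longrightarrow> inf (a::'a::frame) b = bot) \<Longrightarrow> inf a (Sup B) = bot"
  using inf_Sup_distrib_frame[of a B] by (simp add: SUP_eq_const image_iff)

lemma inf_Sup_Sup_eq_bot:
  assumes "\<And>x y. x \<in> A \<Longrightarrow> y \<in> B \<Longrightarrow> inf x y = bot"
  shows "inf (Sup A) (Sup (B::'a::frame set)) = bot"
proof -
  have "inf x (Sup B) = bot" if "x \<in> A" for x
    using assms that by (intro inf_Sup_eq_bot)
  then have "inf (Sup B) (Sup A) = bot"
    by (intro inf_Sup_eq_bot) (simp add: inf_commute)
  then show ?thesis by (simp add: inf_commute)
qed

lemma sup_eq_top_mono: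
  "sup x y = (top::'a::bounded_lattice_top) \<Longrightarrow> x \<le> x' \<Longrightarrow> y \<le> y' \<Longrightarrow> sup x' y' = top"
  by (metis sup_mono top_unique)

lemma inf_pcompl: "inf (a::'a::frame) (pcompl a) = bot"
  unfolding pcompl_def by (rule inf_Sup_eq_bot) (simp add: inf_commute)

lemma le_pcompl_iff: "(b::'a::frame) \<le> pcompl a \<longleftrightarrow> inf b a = bot"
proof
  assume "b \<le> pcompl a"
  then have "inf b a \<le> inf (pcompl a) a" by (rule inf_mono) simp
  then show "inf b a = bot" using inf_pcompl[of a] by (simp add: inf_commute bot_unique)
next
  assume "inf b a = bot"
  then show "b \<le> pcompl a" unfolding pcompl_def by (simp add: Sup_upper)
qed

lemma pcompl_antimono: "(a::'a::frame) \<le> b \<Longrightarrow> pcompl b \<le> pcompl a"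
  by (metis le_pcompl_iff inf_pcompl inf_commute inf.absorb_iff2 inf_left_commute inf_bot_right)

lemma le_pcompl_pcompl: "(a::'a::frame) \<le> pcompl (pcompl a)"
  by (simp add: le_pcompl_iff inf_pcompl)

lemma pcompl_pcompl_pcompl [simp]: "pcompl (pcompl (pcompl (a::'a::frame))) = pcompl a"
  by (simp add: antisym le_pcompl_pcompl pcompl_antimono)

lemma pcompl_bot [simp]: "pcompl (bot::'a::frame) = top"
  using le_pcompl_iff[of top bot] by (simp add: top_unique)

lemma pcompl_le_if_sup_eq_top: "sup (a::'a::frame) b = top \<Longrightarrow> pcompl a \<le> b"
proof -
  assume "sup a b = top"
  then have "pcompl a = inf (pcompl a) (sup a b)" by simp
  also have "\<dots> = inf (pcompl a) b"
    by (simp add: inf_sup_distrib_frame inf_commute[of _ a] inf_pcompl)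
  finally show ?thesis by (metis inf.cobounded2)
qed

lemma rather_below_imp_pcompl_pcompl_le: "rather_below (b::'a::frame) a \<Longrightarrow> pcompl (pcompl b) \<le> a"
  unfolding rather_below_def by (rule pcompl_le_if_sup_eq_top)

lemma rather_below_imp_le: "rather_below (b::'a::frame) a \<Longrightarrow> b \<le> a"
  using le_pcompl_pcompl rather_below_imp_pcompl_pcompl_le order_trans by blast

lemma extremally_disconnectedD:
  "extremally_disconnected TYPE('a::frame) \<Longrightarrow> sup (pcompl a) (pcompl (pcompl (a::'a))) = top"
  unfolding extremally_disconnected_def by blast

lemma rather_below_pcompl_pcompl_if_le:
  assumes "extremally_disconnected TYPE('a::frame)" and "(a::'a) \<le> b"
  shows "rather_below (pcompl (pcompl a)) (pcompl (pcompl b))"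
  unfolding rather_below_def pcompl_pcompl_pcompl
  using extremally_disconnectedD[OF assms(1), of b] pcompl_antimono[OF assms(2)]
  by (rule sup_eq_top_mono) simp

lemma Sup_Sup_greater:
  fixes e :: "'b::dense_linorder \<Rightarrow> 'a::complete_lattice"
  shows "Sup {Sup {e p | p. p > s} | s. s > r} = Sup {e p | p. p > r}"
proof (rule antisym)
  show "Sup {Sup {e p | p. p > s} | s. s > r} \<le> Sup {e p | p. p > r}"
    by (rule Sup_least, clarify, rule Sup_subset_mono) auto
  show "Sup {e p | p. p > r} \<le> Sup {Sup {e p | p. p > s} | s. s > r}"
  proof (rule Sup_least, clarify)
    fix p assume "p > r"
    then obtain s where "r < s" "s < p" using dense by blast
    then show "e p \<le> Sup {Sup {e p | p. p > s} | s. s > r}"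
      by (blast intro: Sup_upper2[of "Sup {e p | p. p > s}"] Sup_upper)
  qed
qed

lemma Sup_Sup_less:
  fixes e :: "'b::dense_linorder \<Rightarrow> 'a::complete_lattice"
  shows "Sup {Sup {e p | p. p < s} | s. s < r} = Sup {e p | p. p < r}"
proof (rule antisym)
  show "Sup {Sup {e p | p. p < s} | s. s < r} \<le> Sup {e p | p. p < r}"
    by (rule Sup_least, clarify, rule Sup_subset_mono) auto
  show "Sup {e p | p. p < r} \<le> Sup {Sup {e p | p. p < s} | s. s < r}"
  proof (rule Sup_least, clarify)
    fix p assume "p < r"
    then obtain s where "p < s" "s < r" using dense by blast
    then show "e p \<le> Sup {Sup {e p | p. p < s} | s. s < r}"
      by (blast intro: Sup_upper2[of "Sup {e p | p. p < s}"] Sup_upper)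
  qed
qed

section \<open>The posets IC_bar, C_bar and H_bar\<close>

lemma IC_bar_iff:
  "f \<in> IC_bar \<longleftrightarrow>
     (\<forall>r s. s \<le> r \<longrightarrow> inf (fst f r) (snd f s) = bot) \<and>
     (\<forall>r. fst f r = Sup {fst f s | s. s > r}) \<and> (\<forall>s. snd f s = Sup {snd f r | r. r < s})"
  by (cases f) (simp add: IC_bar_def)

lemma IC_barI:
  assumes "\<And>r s. s \<le> r \<Longrightarrow> inf (fst f r) (snd f s) = bot"
    and "\<And>r. fst f r = Sup {fst f s | s. s > r}"
    and "\<And>s. snd f s = Sup {snd f r | r. r < s}"
  shows "f \<in> IC_bar"
  using assms unfolding IC_bar_iff by blast

lemma IC_bar_inf_eq_bot: "f \<in> IC_bar \<Longrightarrow> s \<le> r \<Longrightarrow> inf (fst f r) (snd f s) = bot"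
  unfolding IC_bar_iff by blast

lemma IC_bar_fst_eq_Sup: "f \<in> IC_bar \<Longrightarrow> fst f r = Sup {fst f s | s. s > r}"
  unfolding IC_bar_iff by blast

lemma IC_bar_snd_eq_Sup: "f \<in> IC_bar \<Longrightarrow> snd f s = Sup {snd f r | r. r < s}"
  unfolding IC_bar_iff by blast

lemma fst_le_pcompl_snd: "f \<in> IC_bar \<Longrightarrow> s \<le> r \<Longrightarrow> fst f r \<le> pcompl (snd f s)"
  by (simp add: le_pcompl_iff IC_bar_inf_eq_bot)

lemma snd_le_pcompl_fst: "f \<in> IC_bar \<Longrightarrow> s \<le> r \<Longrightarrow> snd f s \<le> pcompl (fst f r)"
  by (simp add: le_pcompl_iff IC_bar_inf_eq_bot inf_commute)

lemma IC_bar_fst_antimono: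
  assumes "f \<in> IC_bar" and "r \<le> r'"
  shows "fst f r' \<le> fst f r"
proof (cases "r = r'")
  case False
  with assms(2) have "fst f r' \<in> {fst f s | s. s > r}" by auto
  then show ?thesis by (subst IC_bar_fst_eq_Sup[OF assms(1)]) (rule Sup_upper)
qed simp

lemma C_barI: "f \<in> IC_bar \<Longrightarrow> (\<And>r s. r < s \<Longrightarrow> sup (fst f r) (snd f s) = top) \<Longrightarrow> f \<in> C_bar"
  unfolding C_bar_def by blast

lemma C_bar_imp_IC_bar: "f \<in> C_bar \<Longrightarrow> f \<in> IC_bar"
  unfolding C_bar_def by blast

lemma C_bar_sup_eq_top: "f \<in> C_bar \<Longrightarrow> r < s \<Longrightarrow> sup (fst f r) (snd f s) = top"
  unfolding C_bar_def by blast

lemma C_bar_rather_below_fst: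
  assumes f: "f \<in> C_bar" and "r < p"
  shows "rather_below (fst f p) (fst f r)"
proof -
  obtain m where m: "r < m" "m < p" using \<open>r < p\<close> dense by blast
  have "snd f m \<le> pcompl (fst f p)"
    using snd_le_pcompl_fst[OF C_bar_imp_IC_bar[OF f]] m(2) by simp
  with C_bar_sup_eq_top[OF f m(1)] have "sup (fst f r) (pcompl (fst f p)) = top"
    by (rule sup_eq_top_mono[OF _ order_refl])
  then show ?thesis by (simp add: rather_below_def sup_commute)
qed

definition ext_reflect :: "'a::frame ext_fn \<Rightarrow> 'a ext_fn" where
  "ext_reflect f = (\<lambda>r. snd f (1 - r), \<lambda>s. fst f (1 - s))"

lemma fst_ext_reflect [simp]: "fst (ext_reflect f) r = snd f (1 - r)"
  and snd_ext_reflect [simp]: "snd (ext_reflect f) s = fst f (1 - s)"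
  by (simp_all add: ext_reflect_def)

lemma reflect_set_greater: "{g (1 - s) | s. s > r} = {g t | t::rat. t < 1 - r}"
proof (rule set_eqI, rule iffI)
  fix x assume "x \<in> {g t | t::rat. t < 1 - r}"
  then obtain t where "x = g t" "t < 1 - r" by blast
  then have "x = g (1 - (1 - t)) \<and> 1 - t > r" by simp
  then show "x \<in> {g (1 - s) | s. s > r}" by blast
qed force

lemma reflect_set_less: "{g (1 - s) | s. s < r} = {g t | t::rat. t > 1 - r}"
proof (rule set_eqI, rule iffI)
  fix x assume "x \<in> {g t | t::rat. t > 1 - r}"
  then obtain t where "x = g t" "t > 1 - r" by blast
  then have "x = g (1 - (1 - t)) \<and> 1 - t < r" by simp
  then show "x \<in> {g (1 - s) | s. s < r}" by blast
qed force

lemma ext_reflect_C_bar: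
  assumes f: "f \<in> C_bar"
  shows "ext_reflect f \<in> C_bar"
proof (rule C_barI[OF IC_barI])
  have fIC: "f \<in> IC_bar" using f by (rule C_bar_imp_IC_bar)
  show "inf (fst (ext_reflect f) r) (snd (ext_reflect f) s) = bot" if "s \<le> r" for r s
    using IC_bar_inf_eq_bot[OF fIC, of "1 - r" "1 - s"] that by (simp add: inf_commute)
  show "fst (ext_reflect f) r = Sup {fst (ext_reflect f) s | s. s > r}" for r
    unfolding fst_ext_reflect reflect_set_greater[of "snd f"] by (rule IC_bar_snd_eq_Sup[OF fIC])
  show "snd (ext_reflect f) s = Sup {snd (ext_reflect f) r | r. r < s}" for s
    unfolding snd_ext_reflect reflect_set_less[of "fst f"] by (rule IC_bar_fst_eq_Sup[OF fIC])
  show "sup (fst (ext_reflect f) r) (snd (ext_reflect f) s) = top" if "r < s" for r s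
    using C_bar_sup_eq_top[OF f, of "1 - s" "1 - r"] that by (simp add: sup_commute)
qed

lemma C_bar_subset_H_bar: "C_bar \<subseteq> H_bar"
proof
  fix f :: "'a ext_fn" assume f: "f \<in> C_bar"
  have "pcompl (fst f r) \<le> snd f s \<and> pcompl (snd f s) \<le> fst f r" if "r < s" for r s
    using C_bar_sup_eq_top[OF f that] by (simp add: pcompl_le_if_sup_eq_top sup_commute)
  then show "f \<in> H_bar" unfolding H_bar_def using C_bar_imp_IC_bar[OF f] by blast
qed

lemma H_bar_subset_C_bar:
  assumes ed: "extremally_disconnected TYPE('a::frame)"
  shows "H_bar \<subseteq> (C_bar :: 'a ext_fn set)"
proof
  fix f :: "'a ext_fn" assume f: "f \<in> H_bar"
  then have fIC: "f \<in> IC_bar" unfolding H_bar_def by blast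
  have H: "pcompl (fst f r) \<le> snd f s" "pcompl (snd f s) \<le> fst f r" if "r < s" for r s
    using f that unfolding H_bar_def by blast+
  show "f \<in> C_bar"
  proof (rule C_barI[OF fIC])
    fix r s :: rat assume "r < s"
    then obtain t where t: "r < t" "t < s" using dense by blast
    have "pcompl (pcompl (snd f t)) \<le> pcompl (fst f t)"
      by (rule pcompl_antimono, rule fst_le_pcompl_snd[OF fIC order_refl])
    also have "\<dots> \<le> snd f s" using H(1)[OF t(2)] .
    finally have "pcompl (pcompl (snd f t)) \<le> snd f s" .
    with extremally_disconnectedD[OF ed] H(2)[OF t(1)] show "sup (fst f r) (snd f s) = top"
      by (rule sup_eq_top_mono)
  qed
qed

lemma regular_pair_H_bar: "(\<lambda>_. pcompl (pcompl a), \<lambda>_. pcompl a) \<in> (H_bar :: 'a::frame ext_fn set)"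
proof -
  have "{c | s::rat. s > r} = {c}" "{c | s::rat. s < r} = {c}" for c :: 'a and r
    using gt_ex lt_ex by blast+
  then show ?thesis unfolding H_bar_def IC_bar_def by (simp add: inf_pcompl inf_commute)
qed

lemma extremally_disconnected_if_C_bar_eq_H_bar:
  assumes "(C_bar :: 'a::frame ext_fn set) = H_bar"
  shows "extremally_disconnected TYPE('a)"
  unfolding extremally_disconnected_def
proof
  fix a :: 'a
  have "(\<lambda>_. pcompl (pcompl a), \<lambda>_. pcompl a) \<in> (C_bar :: 'a ext_fn set)"
    using assms regular_pair_H_bar by blast
  from C_bar_sup_eq_top[OF this, of 0 1] show "sup (pcompl a) (pcompl (pcompl a)) = top"
    by (simp add: sup_commute)
qed

section \<open>Functions from scales and suprema in C_bar\<close>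

definition ext_fn_of_scale :: "(rat \<Rightarrow> 'a::frame) \<Rightarrow> 'a ext_fn" where
  "ext_fn_of_scale e = (\<lambda>r. Sup {e p | p. p > r}, \<lambda>s. Sup {pcompl (e q) | q. q < s})"

lemma fst_ext_fn_of_scale [simp]: "fst (ext_fn_of_scale e) r = Sup {e p | p. p > r}"
  and snd_ext_fn_of_scale [simp]: "snd (ext_fn_of_scale e) s = Sup {pcompl (e q) | q. q < s}"
  by (simp_all add: ext_fn_of_scale_def)

lemma ext_fn_of_scale_C_bar:
  assumes scale: "\<And>p q. p < q \<Longrightarrow> rather_below (e q) (e p)"
  shows "ext_fn_of_scale e \<in> C_bar"
proof (rule C_barI[OF IC_barI])
  show "inf (fst (ext_fn_of_scale e) r) (snd (ext_fn_of_scale e) s) = bot" if "s \<le> r" for r s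
    unfolding fst_ext_fn_of_scale snd_ext_fn_of_scale
  proof (rule inf_Sup_Sup_eq_bot, clarify)
    fix p q assume "p > r" "q < s"
    with that have "q < p" by simp
    then have "pcompl (e q) \<le> pcompl (e p)" by (rule pcompl_antimono[OF rather_below_imp_le[OF scale]])
    then show "inf (e p) (pcompl (e q)) = bot" by (simp add: le_pcompl_iff inf_commute)
  qed
  show "fst (ext_fn_of_scale e) r = Sup {fst (ext_fn_of_scale e) s | s. s > r}" for r
    unfolding fst_ext_fn_of_scale by (rule Sup_Sup_greater[symmetric])
  show "snd (ext_fn_of_scale e) s = Sup {snd (ext_fn_of_scale e) r | r. r < s}" for s
    unfolding snd_ext_fn_of_scale by (rule Sup_Sup_less[symmetric])
  show "sup (fst (ext_fn_of_scale e) r) (snd (ext_fn_of_scale e) s) = top" if "r < s" for r s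
  proof -
    obtain p where "r < p" "p < s" using \<open>r < s\<close> dense by blast
    moreover obtain q where "p < q" "q < s" using \<open>p < s\<close> dense by blast
    ultimately have pq: "r < p" "p < q" "q < s" by simp_all
    have "sup (pcompl (e q)) (e p) = top" using scale[OF pq(2)] unfolding rather_below_def .
    moreover have "pcompl (e q) \<le> snd (ext_fn_of_scale e) s" "e p \<le> fst (ext_fn_of_scale e) r"
      using pq by (auto intro: Sup_upper)
    ultimately show ?thesis by (subst sup_commute) (rule sup_eq_top_mono)
  qed
qed

definition Sup_C_bar :: "'a::frame ext_fn set \<Rightarrow> 'a ext_fn" where
  "Sup_C_bar S = ext_fn_of_scale (\<lambda>t. pcompl (pcompl (Sup {fst f t | f. f \<in> S})))"

lemma Sup_C_bar_C_bar:
  assumes "extremally_disconnected TYPE('a::frame)" and "S \<subseteq> (IC_bar :: 'a ext_fn set)"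
  shows "Sup_C_bar S \<in> C_bar"
  unfolding Sup_C_bar_def
proof (rule ext_fn_of_scale_C_bar, rule rather_below_pcompl_pcompl_if_le[OF assms(1)])
  fix p q :: rat assume "p < q"
  then show "Sup {fst f q | f. f \<in> S} \<le> Sup {fst f p | f. f \<in> S}"
    using assms(2) IC_bar_fst_antimono[of _ p q]
    by (intro Sup_least) (fastforce intro: Sup_upper2)
qed

lemma Sup_C_bar_upper:
  assumes "S \<subseteq> C_bar" and "f \<in> S"
  shows "ext_le f (Sup_C_bar S)"
  unfolding ext_le_def
proof (intro conjI allI)
  have f: "f \<in> C_bar" using assms by blast
  let ?U = "\<lambda>t. Sup {fst f t | f. f \<in> S}"
  have fst_le: "fst f t \<le> ?U t" for t
    using assms(2) by (blast intro: Sup_upper)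
  show "fst f r \<le> fst (Sup_C_bar S) r" for r
  proof -
    have "fst f r = Sup {fst f p | p. p > r}" by (rule IC_bar_fst_eq_Sup[OF C_bar_imp_IC_bar[OF f]])
    also have "\<dots> \<le> fst (Sup_C_bar S) r" unfolding Sup_C_bar_def fst_ext_fn_of_scale
      using fst_le le_pcompl_pcompl by (intro Sup_mono) (blast intro: order_trans)
    finally show ?thesis .
  qed
  show "snd (Sup_C_bar S) s \<le> snd f s" for s
    unfolding Sup_C_bar_def snd_ext_fn_of_scale pcompl_pcompl_pcompl
  proof (rule Sup_least, clarify)
    fix q assume "q < s"
    have "pcompl (?U q) \<le> pcompl (fst f q)" by (rule pcompl_antimono[OF fst_le])
    also have "\<dots> \<le> snd f s" by (rule pcompl_le_if_sup_eq_top[OF C_bar_sup_eq_top[OF f \<open>q < s\<close>]])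
    finally show "pcompl (?U q) \<le> snd f s" .
  qed
qed

lemma Sup_C_bar_least:
  assumes g: "g \<in> C_bar" and ub: "\<And>f. f \<in> S \<Longrightarrow> ext_le f g"
  shows "ext_le (Sup_C_bar S) g"
  unfolding ext_le_def
proof (intro conjI allI)
  let ?U = "\<lambda>t. Sup {fst f t | f. f \<in> S}"
  have U_le: "?U t \<le> fst g t" for t
    using ub unfolding ext_le_def by (blast intro: Sup_least)
  show "fst (Sup_C_bar S) r \<le> fst g r" for r
    unfolding Sup_C_bar_def fst_ext_fn_of_scale
  proof (rule Sup_least, clarify)
    fix p assume "p > r"
    have "pcompl (pcompl (?U p)) \<le> pcompl (pcompl (fst g p))"
      by (intro pcompl_antimono U_le)
    also have "\<dots> \<le> fst g r"
      by (rule rather_below_imp_pcompl_pcompl_le[OF C_bar_rather_below_fst[OF g \<open>p > r\<close>]])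
    finally show "pcompl (pcompl (?U p)) \<le> fst g r" .
  qed
  show "snd g s \<le> snd (Sup_C_bar S) s" for s
  proof -
    have gIC: "g \<in> IC_bar" using g by (rule C_bar_imp_IC_bar)
    have "snd g q \<le> pcompl (?U q)" for q
      using snd_le_pcompl_fst[OF gIC order_refl] pcompl_antimono[OF U_le] by (rule order_trans)
    then have "Sup {snd g q | q. q < s} \<le> snd (Sup_C_bar S) s"
      unfolding Sup_C_bar_def snd_ext_fn_of_scale pcompl_pcompl_pcompl by (intro Sup_mono) blast
    then show ?thesis by (subst IC_bar_snd_eq_Sup[OF gIC])
  qed
qed

lemma complete_subposetI:
  assumes "\<And>S. S \<subseteq> P \<Longrightarrow> \<exists>u \<in> P. (\<forall>f \<in> S. le f u) \<and> (\<forall>v \<in> P. (\<forall>f \<in> S. le f v) \<longrightarrow> le u v)"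
  shows "complete_subposet P le"
  unfolding complete_subposet_def
proof (intro allI impI conjI)
  fix S assume "S \<subseteq> P"
  then show "\<exists>u \<in> P. (\<forall>f \<in> S. le f u) \<and> (\<forall>v \<in> P. (\<forall>f \<in> S. le f v) \<longrightarrow> le u v)"
    by (rule assms)
  let ?L = "{v \<in> P. \<forall>f \<in> S. le v f}"
  obtain l where "l \<in> P" and lower: "\<forall>v \<in> ?L. le v l"
    and greatest: "\<forall>u \<in> P. (\<forall>v \<in> ?L. le v u) \<longrightarrow> le l u"
    using assms[of ?L] by blast
  have "le l f" if "f \<in> S" for f
    using greatest \<open>S \<subseteq> P\<close> that by blast
  with \<open>l \<in> P\<close> lower show "\<exists>l \<in> P. (\<forall>f \<in> S. le l f) \<and> (\<forall>v \<in> P. (\<forall>f \<in> S. le v f) \<longrightarrow> le v l)"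
    by blast
qed

lemma complete_C_bar_if_extremally_disconnected:
  assumes "extremally_disconnected TYPE('a::frame)"
  shows "complete_subposet (C_bar :: 'a ext_fn set) ext_le"
proof (rule complete_subposetI)
  fix S :: "'a ext_fn set" assume S: "S \<subseteq> C_bar"
  then have "S \<subseteq> IC_bar" using C_bar_imp_IC_bar by blast
  show "\<exists>u \<in> C_bar. (\<forall>f \<in> S. ext_le f u) \<and> (\<forall>v \<in> C_bar. (\<forall>f \<in> S. ext_le f v) \<longrightarrow> ext_le u v)"
  proof (intro bexI conjI ballI impI)
    show "Sup_C_bar S \<in> C_bar" using assms \<open>S \<subseteq> IC_bar\<close> by (rule Sup_C_bar_C_bar)
    show "ext_le f (Sup_C_bar S)" if "f \<in> S" for f using S that by (rule Sup_C_bar_upper)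
    show "ext_le (Sup_C_bar S) v" if "v \<in> C_bar" "\<forall>f \<in> S. ext_le f v" for v
      using that by (intro Sup_C_bar_least) auto
  qed
qed

section \<open>Completeness of C_bar implies extremal disconnectedness\<close>

definition scale :: "(rat \<Rightarrow> 'a::frame) \<Rightarrow> 'a \<Rightarrow> 'a \<Rightarrow> bool" where
  "scale c b a \<longleftrightarrow> c 0 = b \<and> c 1 = a \<and>
     (\<forall>p q. 0 \<le> p \<and> p < q \<and> q \<le> 1 \<longrightarrow> rather_below (c p) (c q))"

lemma completely_below_iff_scale: "completely_below b a \<longleftrightarrow> (\<exists>c. scale c b a)"
  unfolding completely_below_def scale_def by blast

lemma scaleD: "scale c b a \<Longrightarrow> 0 \<le> p \<Longrightarrow> p < q \<Longrightarrow> q \<le> 1 \<Longrightarrow> rather_below (c p) (c q)"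
  unfolding scale_def by blast

lemma scale_le:
  assumes "scale c b a" and "0 \<le> p" and "p \<le> 1"
  shows "c p \<le> a"
proof -
  have "c p \<le> c 1"
    using assms rather_below_imp_le[OF scaleD[OF assms(1,2)]] by (cases "p = 1") auto
  with assms(1) show ?thesis by (simp add: scale_def)
qed

definition reversed_scale :: "(rat \<Rightarrow> 'a::frame) \<Rightarrow> rat \<Rightarrow> 'a" where
  "reversed_scale c p = (if p < 0 then top else if p \<le> 1 then c (1 - p) else bot)"

lemma reversed_scale_rather_below:
  assumes "scale c b a" and "p < q"
  shows "rather_below (reversed_scale c q) (reversed_scale c p)"
proof -
  consider "p < 0" | "1 < q" | "0 \<le> p" "q \<le> 1" by linarith
  then show ?thesis
  proof cases
    case 3
    with assms show ?thesis by (simp add: reversed_scale_def scaleD)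
  qed (auto simp: reversed_scale_def rather_below_def)
qed

lemma reversed_scale_C_bar: "scale c b a \<Longrightarrow> ext_fn_of_scale (reversed_scale c) \<in> C_bar"
  by (intro ext_fn_of_scale_C_bar reversed_scale_rather_below)

lemma le_fst_reversed_scale:
  assumes "scale c b a" and "r < 1"
  shows "b \<le> fst (ext_fn_of_scale (reversed_scale c)) r"
proof -
  have "reversed_scale c 1 = b" using assms(1) by (simp add: reversed_scale_def scale_def)
  with assms(2) show ?thesis by (auto intro: Sup_upper)
qed

lemma fst_reversed_scale_le_snd:
  assumes c: "scale c b a" and c': "scale c' b' a'" and disj: "inf a a' = bot"
  shows "fst (ext_fn_of_scale (reversed_scale c)) r \<le> snd (ext_fn_of_scale (reversed_scale c')) (1 - r)"
  unfolding fst_ext_fn_of_scale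
proof (rule Sup_least, clarify)
  fix p assume "p > r"
  let ?rhs = "snd (ext_fn_of_scale (reversed_scale c')) (1 - r)"
  consider "p < 0" | "0 \<le> p" "p \<le> 1" | "1 < p" by linarith
  then show "reversed_scale c p \<le> ?rhs"
  proof cases
    case 1
    with \<open>p > r\<close> have "1 < 1 - r / 2" "1 - r / 2 < 1 - r" by simp_all
    then have "pcompl (reversed_scale c' (1 - r / 2)) \<le> ?rhs"
      unfolding snd_ext_fn_of_scale by (blast intro: Sup_upper)
    moreover have "reversed_scale c' (1 - r / 2) = bot"
      using \<open>1 < 1 - r / 2\<close> by (simp add: reversed_scale_def)
    ultimately show ?thesis by (simp add: top_unique)
  next
    case 2
    have "reversed_scale c p \<le> a" using scale_le[OF c] 2 by (simp add: reversed_scale_def)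
    also have "\<dots> \<le> pcompl a'" using disj by (simp add: le_pcompl_iff)
    also have "\<dots> = pcompl (reversed_scale c' 0)" using c' by (simp add: reversed_scale_def scale_def)
    also have "\<dots> \<le> ?rhs" unfolding snd_ext_fn_of_scale
      using \<open>p > r\<close> 2 by (intro Sup_upper) auto
    finally show ?thesis .
  next
    case 3
    then show ?thesis by (simp add: reversed_scale_def)
  qed
qed

lemma reversed_scale_le_ext_reflect:
  assumes c: "scale c b a" and c': "scale c' b' (pcompl a)"
  shows "ext_le (ext_fn_of_scale (reversed_scale c)) (ext_reflect (ext_fn_of_scale (reversed_scale c')))"
  unfolding ext_le_def fst_ext_reflect snd_ext_reflect
proof (intro conjI allI)
  show "fst (ext_fn_of_scale (reversed_scale c)) r \<le> snd (ext_fn_of_scale (reversed_scale c')) (1 - r)" for r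
    using c c' inf_pcompl by (rule fst_reversed_scale_le_snd)
  show "fst (ext_fn_of_scale (reversed_scale c')) (1 - s) \<le> snd (ext_fn_of_scale (reversed_scale c)) s" for s
    using fst_reversed_scale_le_snd[OF c' c, of "1 - s"] inf_pcompl[of a] by (simp add: inf_commute)
qed

lemma completely_regular_le:
  assumes "completely_regular_frame TYPE('a::frame)" and "\<And>b. completely_below b x \<Longrightarrow> b \<le> y"
  shows "(x::'a) \<le> y"
proof -
  have "x = Sup {b. completely_below b x}"
    using assms(1) unfolding completely_regular_frame_def by blast
  also have "\<dots> \<le> y" using assms(2) by (blast intro: Sup_least)
  finally show ?thesis .
qed

lemma le_fst_if_above_scales:
  assumes cr: "completely_regular_frame TYPE('a::frame)"
    and above: "\<And>c b. scale c b a \<Longrightarrow> ext_le (ext_fn_of_scale (reversed_scale c)) h"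
    and "r < 1"
  shows "(a::'a) \<le> fst h r"
proof (rule completely_regular_le[OF cr])
  fix b assume "completely_below b a"
  then obtain c where c: "scale c b a" unfolding completely_below_iff_scale by blast
  have "fst (ext_fn_of_scale (reversed_scale c)) r \<le> fst h r"
    using above[OF c] unfolding ext_le_def by blast
  with le_fst_reversed_scale[OF c \<open>r < 1\<close>] show "b \<le> fst h r" by (rule order_trans)
qed

lemma le_snd_if_below_reflected_scales:
  assumes cr: "completely_regular_frame TYPE('a::frame)"
    and below: "\<And>c b. scale c b a \<Longrightarrow> ext_le h (ext_reflect (ext_fn_of_scale (reversed_scale c)))"
    and "0 < s"
  shows "(a::'a) \<le> snd h s"
proof (rule completely_regular_le[OF cr])
  fix b assume "completely_below b a"
  then obtain c where c: "scale c b a" unfolding completely_below_iff_scale by blast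
  have "fst (ext_fn_of_scale (reversed_scale c)) (1 - s) \<le> snd h s"
    using below[OF c] unfolding ext_le_def by simp
  moreover have "b \<le> fst (ext_fn_of_scale (reversed_scale c)) (1 - s)"
    using \<open>0 < s\<close> by (intro le_fst_reversed_scale[OF c]) simp
  ultimately show "b \<le> snd h s" by (rule order_trans[rotated])
qed

lemma extremally_disconnected_if_complete_C_bar:
  assumes cr: "completely_regular_frame TYPE('a::frame)"
    and complete: "complete_subposet (C_bar :: 'a ext_fn set) ext_le"
  shows "extremally_disconnected TYPE('a)"
  unfolding extremally_disconnected_def
proof
  fix a :: 'a
  define S where "S = {ext_fn_of_scale (reversed_scale c) | c b. scale c b a}"
  have "S \<subseteq> C_bar" unfolding S_def using reversed_scale_C_bar by blast
  with complete obtain h where h: "h \<in> C_bar" and upper: "\<forall>f \<in> S. ext_le f h"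
    and least: "\<forall>v \<in> C_bar. (\<forall>f \<in> S. ext_le f v) \<longrightarrow> ext_le h v"
    unfolding complete_subposet_def by meson
  have hIC: "h \<in> IC_bar" using h by (rule C_bar_imp_IC_bar)
  have "a \<le> fst h (1/2)"
    using cr by (rule le_fst_if_above_scales) (use upper[unfolded S_def] in blast, simp)
  then have snd_le: "snd h (1/2) \<le> pcompl a"
    using snd_le_pcompl_fst[OF hIC order_refl] pcompl_antimono by (blast intro: order_trans)
  have "ext_le h (ext_reflect (ext_fn_of_scale (reversed_scale c')))" if c': "scale c' b' (pcompl a)" for c' b'
  proof -
    have "ext_reflect (ext_fn_of_scale (reversed_scale c')) \<in> C_bar"
      using reversed_scale_C_bar[OF c'] by (rule ext_reflect_C_bar)
    moreover have "\<forall>f \<in> S. ext_le f (ext_reflect (ext_fn_of_scale (reversed_scale c')))"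
      unfolding S_def using reversed_scale_le_ext_reflect c' by blast
    ultimately show ?thesis using least by blast
  qed
  then have "pcompl a \<le> snd h (1/4)"
    using cr by (intro le_snd_if_below_reflected_scales) auto
  then have fst_le: "fst h (1/4) \<le> pcompl (pcompl a)"
    using fst_le_pcompl_snd[OF hIC order_refl] pcompl_antimono by (blast intro: order_trans)
  have "sup (pcompl (pcompl a)) (pcompl a) = top"
    by (rule sup_eq_top_mono[OF C_bar_sup_eq_top[OF h] fst_le snd_le]) simp
  then show "sup (pcompl a) (pcompl (pcompl a)) = top" by (simp add: sup_commute)
qed

theorem proposition3p11:
  assumes "completely_regular_frame TYPE('a::frame)"
  shows "(extremally_disconnected TYPE('a) \<longleftrightarrow> (C_bar :: 'a ext_fn set) = H_bar)
       \<and> ((C_bar :: 'a ext_fn set) = H_bar \<longleftrightarrow> complete_subposet (C_bar :: 'a ext_fn set) ext_le)"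
proof -
  have "extremally_disconnected TYPE('a) \<longleftrightarrow> (C_bar :: 'a ext_fn set) = H_bar"
    using C_bar_subset_H_bar H_bar_subset_C_bar extremally_disconnected_if_C_bar_eq_H_bar
    by (metis subset_antisym)
  moreover have "extremally_disconnected TYPE('a) \<longleftrightarrow> complete_subposet (C_bar :: 'a ext_fn set) ext_le"
    using complete_C_bar_if_extremally_disconnected extremally_disconnected_if_complete_C_bar[OF assms]
    by metis
  ultimately show ?thesis by blast
qed

end
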